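(* There exists a subclass $\mathbf{X}$ of the class $\mathbf{M}$ of all metric spaces such that $\mathbf{P}_{\mathbf{X}}=\mathbf{SI}$.
   Context: All metric spaces are assumed to have nonempty underlying sets. $\mathbf{F}$ is the set of all functions $f:[0,\infty)\to[0,\infty)$. $f\in\mathbf{F}$ is amenable if $f^{-1}(0)=\{0\}$; increasing if $x\le y$ implies $f(x)\le f(y)$; subadditive if $f(x+y)\le f(x)+f(y)$ for all $x,y\ge0$. $\mathbf{SI}$ is the set of all amenable, increasing, subadditive $f\in\mathbf{F}$. For a class $\mathbf{X}$ of metric spaces, $\mathbf{P}_{\mathbf{X}}$ denotes the set of all $f\in\mathbf{F}$ such that for every metric space $(X,d)$, if $(X,d)\in\mathbf{X}$ then $(X,f\circ d)\in\mathbf{X}$ (where $f\circ d(x,y)=f(d(x,y))$; membership requires $f\circ d$ to be a metric). *)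

theory Defs
  imports Complex_Main
begin

text \<open>Functions [0,\<infinity>) \<rightarrow> [0,\<infinity>) are represented as real \<Rightarrow> real; values
  at negative arguments are irrelevant (all conditions only look at x \<ge> 0).\<close>

definition FF :: "(real \<Rightarrow> real) set" where
  "FF = {f. \<forall>x\<ge>0. f x \<ge> 0}"

definition amenable :: "(real \<Rightarrow> real) \<Rightarrow> bool" where
  "amenable f \<longleftrightarrow> (\<forall>x\<ge>0. f x = 0 \<longleftrightarrow> x = 0)"

definition increasing_F :: "(real \<Rightarrow> real) \<Rightarrow> bool" where
  "increasing_F f \<longleftrightarrow> (\<forall>x y. 0 \<le> x \<longrightarrow> x \<le> y \<longrightarrow> f x \<le> f y)"

definition subadditive_F :: "(real \<Rightarrow> real) \<Rightarrow> bool" where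
  "subadditive_F f \<longleftrightarrow> (\<forall>x\<ge>0. \<forall>y\<ge>0. f (x + y) \<le> f x + f y)"

definition SI :: "(real \<Rightarrow> real) set" where
  "SI = {f \<in> FF. amenable f \<and> increasing_F f \<and> subadditive_F f}"

definition metric_on :: "'a set \<Rightarrow> ('a \<Rightarrow> 'a \<Rightarrow> real) \<Rightarrow> bool" where
  "metric_on A d \<longleftrightarrow>
     (\<forall>x\<in>A. \<forall>y\<in>A. d x y \<ge> 0 \<and> (d x y = 0 \<longleftrightarrow> x = y) \<and> d x y = d y x) \<and>
     (\<forall>x\<in>A. \<forall>y\<in>A. \<forall>z\<in>A. d x z \<le> d x y + d y z)"

text \<open>Metric spaces with carrier in type 'a. The distance function is normalised
  to be 0 outside A \<times> A, so that a space is a unique pair (A,d).\<close>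
definition MS :: "('a set \<times> ('a \<Rightarrow> 'a \<Rightarrow> real)) set" where
  "MS = {(A, d). A \<noteq> {} \<and> metric_on A d \<and> (\<forall>x y. x \<notin> A \<or> y \<notin> A \<longrightarrow> d x y = 0)}"

definition compose_dist :: "(real \<Rightarrow> real) \<Rightarrow> 'a set \<Rightarrow> ('a \<Rightarrow> 'a \<Rightarrow> real) \<Rightarrow> ('a \<Rightarrow> 'a \<Rightarrow> real)" where
  "compose_dist f A d = (\<lambda>x y. if x \<in> A \<and> y \<in> A then f (d x y) else 0)"

definition PP :: "('a set \<times> ('a \<Rightarrow> 'a \<Rightarrow> real)) set \<Rightarrow> (real \<Rightarrow> real) set" where
  "PP X = {f \<in> FF. \<forall>A d. (A, d) \<in> X \<longrightarrow> (A, compose_dist f A d) \<in> X}"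

end

theory Submission
  imports Defs
begin

text \<open>Take the three-point spaces with side lengths g x, g y, g (x + y) for g \<in> SI and
  x, y > 0. Since SI is closed under composition, every f \<in> SI preserves this class.
  Conversely the class contains the triangle with sides x, y, x + y, and its image
  under f is again such a space only if f 0 = 0 and f x, f y, f (x + y) satisfy the
  inequalities that hold for every member of SI: positivity, monotonicity along
  x \<le> x + y, and subadditivity. These say exactly that f \<in> SI.\<close>

definition tri_dist :: "'a \<Rightarrow> 'a \<Rightarrow> 'a \<Rightarrow> real \<Rightarrow> real \<Rightarrow> real \<Rightarrow> 'a \<Rightarrow> 'a \<Rightarrow> real" where
  "tri_dist p q r a b c = (\<lambda>u v. if u \<in> {p,q,r} \<and> v \<in> {p,q,r} then
      (if u = v then 0 else if {u,v} = {p,q} then a else if {u,v} = {q,r} then b else c) else 0)"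

lemma tri_dist_in_MS:
  assumes "p \<noteq> q" "q \<noteq> r" "p \<noteq> r"
    and "0 < a" "0 < b" "c \<le> a + b" "a \<le> c" "b \<le> c"
  shows "({p,q,r}, tri_dist p q r a b c) \<in> MS"
  using assms unfolding MS_def metric_on_def tri_dist_def
  by (auto simp: doubleton_eq_iff)

lemma tri_dist_simps:
  assumes "p \<noteq> q" "q \<noteq> r" "p \<noteq> r"
  shows "tri_dist p q r a b c p p = 0" "tri_dist p q r a b c p q = a"
    "tri_dist p q r a b c q r = b" "tri_dist p q r a b c p r = c"
  using assms unfolding tri_dist_def by (auto simp: doubleton_eq_iff)

lemma compose_dist_tri_dist:
  assumes "f 0 = 0"
  shows "compose_dist f {p,q,r} (tri_dist p q r a b c) = tri_dist p q r (f a) (f b) (f c)"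
  using assms unfolding compose_dist_def tri_dist_def by (auto simp: fun_eq_iff)

lemma SI_D:
  assumes "g \<in> SI"
  shows "g 0 = 0" and "0 \<le> x \<Longrightarrow> 0 \<le> g x" and "0 < x \<Longrightarrow> 0 < g x"
    and "0 \<le> x \<Longrightarrow> x \<le> y \<Longrightarrow> g x \<le> g y"
    and "0 \<le> x \<Longrightarrow> 0 \<le> y \<Longrightarrow> g (x + y) \<le> g x + g y"
  using assms unfolding SI_def FF_def amenable_def increasing_F_def subadditive_F_def
  by (auto simp: order_less_le)

lemma id_in_SI: "(\<lambda>x. x) \<in> SI"
  unfolding SI_def FF_def amenable_def increasing_F_def subadditive_F_def by auto

lemma SI_comp:
  assumes f: "f \<in> SI" and g: "g \<in> SI"
  shows "f \<circ> g \<in> SI"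
proof -
  have "f (g (x + y)) \<le> f (g x) + f (g y)" if "0 \<le> x" "0 \<le> y" for x y
  proof -
    have "f (g (x + y)) \<le> f (g x + g y)"
      using that by (intro SI_D(4)[OF f] SI_D(2,5)[OF g]) simp_all
    also have "\<dots> \<le> f (g x) + f (g y)"
      using that by (intro SI_D(5)[OF f] SI_D(2)[OF g])
    finally show ?thesis .
  qed
  moreover have "f (g x) = 0 \<longleftrightarrow> x = 0" if "0 \<le> x" for x
    using that SI_D(1,3)[OF f] SI_D(1,3)[OF g] by (cases "x = 0") (auto simp: order_less_le)
  ultimately show ?thesis
    using SI_D(2,4)[OF f] SI_D(2,4)[OF g]
    unfolding SI_def FF_def amenable_def increasing_F_def subadditive_F_def by simp
qed

lemma SI_I:
  assumes "f \<in> FF" "f 0 = 0"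
    and pos: "\<And>x. 0 < x \<Longrightarrow> 0 < f x"
    and mono: "\<And>x y. 0 < x \<Longrightarrow> 0 < y \<Longrightarrow> f x \<le> f (x + y)"
    and sub: "\<And>x y. 0 < x \<Longrightarrow> 0 < y \<Longrightarrow> f (x + y) \<le> f x + f y"
  shows "f \<in> SI"
proof -
  have nonneg: "0 \<le> f x" if "0 \<le> x" for x
    using assms(1) that unfolding FF_def by simp
  have "f x \<le> f y" if "0 \<le> x" "x \<le> y" for x y
    using that mono[of x "y - x"] nonneg[of y] \<open>f 0 = 0\<close>
    by (cases "x = 0 \<or> x = y") (auto simp: order_less_le)
  moreover have "f (x + y) \<le> f x + f y" if "0 \<le> x" "0 \<le> y" for x y
    using that sub[of x y] \<open>f 0 = 0\<close> by (cases "x = 0 \<or> y = 0") (auto simp: order_less_le)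
  moreover have "f x = 0 \<longleftrightarrow> x = 0" if "0 \<le> x" for x
    using that pos[of x] \<open>f 0 = 0\<close> by (auto simp: order_less_le)
  ultimately show ?thesis
    using assms(1) unfolding SI_def amenable_def increasing_F_def subadditive_F_def by simp
qed

definition tri_spaces :: "'a \<Rightarrow> 'a \<Rightarrow> 'a \<Rightarrow> ('a set \<times> ('a \<Rightarrow> 'a \<Rightarrow> real)) set" where
  "tri_spaces p q r = {({p,q,r}, tri_dist p q r (g x) (g y) (g (x + y))) | g x y.
      g \<in> SI \<and> 0 < x \<and> 0 < y}"

lemma tri_spacesI:
  "g \<in> SI \<Longrightarrow> 0 < x \<Longrightarrow> 0 < y \<Longrightarrow>
    ({p,q,r}, tri_dist p q r (g x) (g y) (g (x + y))) \<in> tri_spaces p q r"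
  unfolding tri_spaces_def by blast

lemma tri_spacesE:
  assumes "(A, d) \<in> tri_spaces p q r"
  obtains g x y where "A = {p,q,r}" "d = tri_dist p q r (g x) (g y) (g (x + y))"
    "g \<in> SI" "0 < x" "0 < y"
  using assms unfolding tri_spaces_def by blast

lemma tri_spaces_subset_MS:
  assumes "p \<noteq> q" "q \<noteq> r" "p \<noteq> r"
  shows "tri_spaces p q r \<subseteq> MS"
proof (rule subrelI)
  fix A d assume "(A, d) \<in> tri_spaces p q r"
  then obtain g x y where s: "A = {p,q,r}" "d = tri_dist p q r (g x) (g y) (g (x + y))"
    and g: "g \<in> SI" "0 < x" "0 < y"
    by (rule tri_spacesE)
  have "g x \<le> g (x + y)" "g y \<le> g (y + x)" "g (x + y) \<le> g x + g y"
    using g by (simp_all add: SI_D(4,5)[OF g(1)])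
  then show "(A, d) \<in> MS"
    unfolding s using SI_D(3)[OF g(1)] g(2,3)
    by (intro tri_dist_in_MS assms) (simp_all add: add.commute[of y])
qed

lemma SI_subset_PP_tri_spaces: "SI \<subseteq> PP (tri_spaces p q r)"
proof
  fix f assume f: "f \<in> SI"
  have "(A, compose_dist f A d) \<in> tri_spaces p q r" if Ad: "(A, d) \<in> tri_spaces p q r" for A d
  proof -
    obtain g x y where A: "A = {p,q,r}" "d = tri_dist p q r (g x) (g y) (g (x + y))"
      and g: "g \<in> SI" "0 < x" "0 < y"
      using Ad by (rule tri_spacesE)
    show ?thesis
      using tri_spacesI[OF SI_comp[OF f g(1)] g(2,3)]
      unfolding A compose_dist_tri_dist[of f, OF SI_D(1)[OF f]] by (simp add: o_def)
  qed
  then show "f \<in> PP (tri_spaces p q r)"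
    using f unfolding PP_def SI_def by auto
qed

lemma PP_tri_spaces_subset_SI:
  assumes d: "p \<noteq> q" "q \<noteq> r" "p \<noteq> r"
  shows "PP (tri_spaces p q r) \<subseteq> SI"
proof
  fix f assume f: "f \<in> PP (tri_spaces p q r)"
  have triangle: "f 0 = 0 \<and> 0 < f x \<and> f x \<le> f (x + y) \<and> f (x + y) \<le> f x + f y"
    if "0 < x" "0 < y" for x y
  proof -
    have "({p,q,r}, tri_dist p q r x y (x + y)) \<in> tri_spaces p q r"
      using tri_spacesI[OF id_in_SI that] .
    with f have "({p,q,r}, compose_dist f {p,q,r} (tri_dist p q r x y (x + y)))
        \<in> tri_spaces p q r"
      unfolding PP_def by blast
    then obtain g x' y' where g: "g \<in> SI" "0 < x'" "0 < y'"
      and eq: "compose_dist f {p,q,r} (tri_dist p q r x y (x + y))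
               = tri_dist p q r (g x') (g y') (g (x' + y'))"
      by (rule tri_spacesE)
    have "f 0 = 0" "f x = g x'" "f y = g y'" "f (x + y) = g (x' + y')"
      using fun_cong[OF fun_cong[OF eq, of p], of p] fun_cong[OF fun_cong[OF eq, of p], of q]
        fun_cong[OF fun_cong[OF eq, of q], of r] fun_cong[OF fun_cong[OF eq, of p], of r]
      by (simp_all add: compose_dist_def tri_dist_simps[OF d])
    moreover have "0 < g x'" "g x' \<le> g (x' + y')" "g (x' + y') \<le> g x' + g y'"
      using g by (simp_all add: SI_D[OF g(1)])
    ultimately show ?thesis by simp
  qed
  show "f \<in> SI"
  proof (rule SI_I)
    show "f \<in> FF" using f unfolding PP_def by simp
    show "f 0 = 0" using triangle[of 1 1] by simp
  qed (simp_all add: triangle)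
qed

lemma PP_tri_spaces:
  assumes "p \<noteq> q" "q \<noteq> r" "p \<noteq> r"
  shows "PP (tri_spaces p q r) = SI"
  using PP_tri_spaces_subset_SI[OF assms] SI_subset_PP_tri_spaces by (rule equalityI)

theorem mainTheorem9:
  assumes "infinite (UNIV :: 'a set)"
  shows "\<exists>X :: ('a set \<times> ('a \<Rightarrow> 'a \<Rightarrow> real)) set. X \<subseteq> MS \<and> PP X = SI"
proof -
  obtain S :: "'a set" where "finite S" "card S = 3"
    using infinite_arbitrarily_large[OF assms] by blast
  then obtain p q r :: 'a where pqr: "p \<noteq> q" "q \<noteq> r" "p \<noteq> r"
    by (auto simp: card_3_iff)
  show ?thesis
    using tri_spaces_subset_MS[OF pqr] PP_tri_spaces[OF pqr] by (intro exI conjI)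
qed

end
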